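(* Let $n$ be odd, let $A=S(n)$, and let $p'$ be a prime divisor of $n$ with $v_{p'}(n)\geq 2$. Let $n'=n/p'$ and let $f:U(n)\to U(n')$ be the natural map. Then $L(n';p')\subseteq f(A)$.
   Context: $U(m)$ is the unit group of $\mathbb{Z}_m$; $v_p(n)=r$ means $p^r\mid n$ and $p^{r+1}\nmid n$. For odd $m=\prod p_i^{r_i}$, prime $p\mid m$ and $a\in U(m)$, $\left(\frac{a}{p}\right)$ is the Legendre symbol of the image of $a$ mod $p$, $\left(\frac{a}{m}\right)=\prod\left(\frac{a}{p_i}\right)^{r_i}$, $S(m)$ is the kernel of $a\mapsto\left(\frac{a}{m}\right)$ on $U(m)$, and $L(m;p')=\{a\in U(m):\left(\frac{a}{m}\right)=\left(\frac{a}{p'}\right)\}$ for a prime $p'\mid m$. The natural map $U(n)\to U(n')$ is induced by $a+n\mathbb{Z}\mapsto a+n'\mathbb{Z}$. *)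

theory Defs
  imports "HOL-Number_Theory.Number_Theory"
begin

text \<open>Unit group of Z_m, represented by the residues 0 <= a < m coprime to m.\<close>
definition U :: "nat \<Rightarrow> nat set" where
  "U m = {a. a < m \<and> coprime a m}"

definition jsym :: "nat \<Rightarrow> nat \<Rightarrow> int" where
  "jsym a m = (\<Prod>p\<in>prime_factors m. Legendre (int a) (int p) ^ multiplicity p m)"

definition S :: "nat \<Rightarrow> nat set" where
  "S m = {a \<in> U m. jsym a m = 1}"

definition L :: "nat \<Rightarrow> nat \<Rightarrow> nat set" where
  "L m p' = {a \<in> U m. jsym a m = Legendre (int a) (int p')}"

text \<open>Natural map U(n) -> U(n'), a + nZ |-> a + n'Z.\<close>
definition natmap :: "nat \<Rightarrow> nat \<Rightarrow> nat" where
  "natmap n' a = a mod n'"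

end

theory Submission
  imports Defs
begin

text \<open>A unit b of U(n/p') is its own preimage. Since p' divides n/p', the numbers n and n/p' have
the same prime factors, so b is a unit mod n, and by multiplicativity of the symbol
(b/n) = (b/p') (b/(n/p')), which is (b/p')^2 = 1 for b in L(n/p'; p').
The argument works for every prime p'.\<close>

lemma jsym_eq_prod_mset: "jsym a m = (\<Prod>p\<in>#prime_factorization m. Legendre (int a) (int p))"
  unfolding jsym_def image_prod_mset_multiplicity
  by (intro prod.cong) (auto simp: count_prime_factorization_prime in_prime_factors_imp_prime)

lemma jsym_mult: "m \<noteq> 0 \<Longrightarrow> k \<noteq> 0 \<Longrightarrow> jsym a (m * k) = jsym a m * jsym a k"
  by (simp add: jsym_eq_prod_mset prime_factorization_mult)

lemma jsym_prime: "prime p \<Longrightarrow> jsym a p = Legendre (int a) (int p)"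
  by (simp add: jsym_eq_prod_mset prime_factorization_prime)

lemma Legendre_square_eq_1:
  assumes "\<not> int p dvd a" shows "Legendre a (int p) ^ 2 = 1"
  using assms by (simp add: Legendre_def cong_0_iff)

lemma L_subset_S_mult:
  assumes "prime p" "p dvd m"
  shows "L m p \<subseteq> S (p * m)"
proof
  fix a assume "a \<in> L m p"
  then have a: "a < m" "coprime a m" "jsym a m = Legendre (int a) (int p)"
    by (auto simp: L_def U_def)
  have "m \<noteq> 0" using a(1) by simp
  have "\<not> p dvd a"
    using a(2) assms by (metis coprime_common_divisor not_prime_unit)
  then have "jsym a (p * m) = Legendre (int a) (int p) ^ 2"
    using assms \<open>m \<noteq> 0\<close> a(3)
    by (simp add: jsym_mult jsym_prime power2_eq_square prime_gt_0_nat)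
  also have "\<dots> = 1"
    using \<open>\<not> p dvd a\<close> by (intro Legendre_square_eq_1) simp
  finally have "jsym a (p * m) = 1" .
  moreover have "coprime a (p * m)"
    using a(2) coprime_divisors[OF dvd_refl assms(2) a(2)] by simp
  moreover have "a < p * m"
    using a(1) prime_gt_0_nat[OF assms(1)] by (simp add: less_le_trans)
  ultimately show "a \<in> S (p * m)"
    by (simp add: S_def U_def)
qed

theorem lemma4p1:
  fixes n p' :: nat
  assumes "odd n"
    and "prime p'" and "p' dvd n"
    and "multiplicity p' n \<ge> 2"
  shows "L (n div p') p' \<subseteq> natmap (n div p') ` S n"
proof -
  define m where "m = n div p'"
  have n_eq: "n = p' * m"
    using assms(3) by (simp add: m_def)
  have "p' ^ 2 dvd n"
    using assms(4) multiplicity_dvd[of p' n] by (meson dvd_trans le_imp_power_dvd)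
  then have "p' dvd m"
    using assms(2) by (simp add: n_eq power2_eq_square prime_gt_0_nat)
  then have "L m p' \<subseteq> S n"
    unfolding n_eq by (rule L_subset_S_mult[OF assms(2)])
  moreover have "natmap m a = a" if "a \<in> L m p'" for a
    using that by (simp add: natmap_def L_def U_def)
  ultimately show ?thesis
    unfolding m_def[symmetric] by force
qed

end
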